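(* For all integers $q\ge1$ and $t\ge1$, $\mathsf{DEL}_{\mathrm{cor}}(q,t)\le \mathsf{INS}_{\mathrm{cor}}(q,t)$.
   Context: Let $[q]=\{0,1,\dots,q-1\}$. For $1\le m\le q$, a partial permutation of length $m$ over $[q]$ is a sequence of $m$ pairwise distinct elements of $[q]$. Let $\mathcal{S}_m^q$ be the set of those of length $m$ and $\mathcal{S}_{\mathrm{all}}^q=\bigcup_{m=1}^{q}\mathcal{S}_m^q$. A code is any subset of $\mathcal{S}_{\mathrm{all}}^q$. Juxtaposition $\omega\pi$ denotes concatenation with $\omega$ on the left. For $\pi=(\pi_1,\dots,\pi_m)$ and integer $j\ge 0$, $\pi_{\downarrow j}=(\pi_{k+1},\dots,\pi_m)$ with $k=\min(j,m-1)$; $\mathcal{B}_{\mathrm{del}}^t(\pi)=\{\pi_{\downarrow j}:0\le j\le t\}$. $\mathcal{B}_{\mathrm{ins}}^t(\pi)$ is the set of all $\omega\pi\in\mathcal{S}_{\mathrm{all}}^q$ with $\omega$ a (possibly empty) sequence of at most $t$ elements of $[q]$. For $X\in\{\mathrm{del},\mathrm{ins}\}$, a code $\mathcal{C}$ is $t$-tail-$X$-correcting if $\mathcal{B}_X^t(\pi_1)\cap\mathcal{B}_X^t(\pi_2)=\emptyset$ for all distinct $\pi_1,\pi_2\in\mathcal{C}$. $\mathsf{DEL}_{\mathrm{cor}}(q,t)$ and $\mathsf{INS}_{\mathrm{cor}}(q,t)$ denote the maximum sizes of $t$-tail-deletion-correcting and $t$-tail-insertion-correcting codes in $\mathcal{S}_{\mathrm{all}}^q$.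 *)

theory Defs
  imports Main
begin

definition S_all :: "nat \<Rightarrow> nat list set" where
  "S_all q = {p. distinct p \<and> set p \<subseteq> {..<q} \<and> 1 \<le> length p \<and> length p \<le> q}"

definition tail_del :: "nat list \<Rightarrow> nat \<Rightarrow> nat list" where
  "tail_del p j = drop (min j (length p - 1)) p"

definition B_del :: "nat \<Rightarrow> nat list \<Rightarrow> nat list set" where
  "B_del t p = {tail_del p j | j. j \<le> t}"

definition B_ins :: "nat \<Rightarrow> nat \<Rightarrow> nat list \<Rightarrow> nat list set" where
  "B_ins q t p = {w @ p | w. length w \<le> t \<and> set w \<subseteq> {..<q} \<and> w @ p \<in> S_all q}"

definition del_correcting :: "nat \<Rightarrow> nat \<Rightarrow> nat list set \<Rightarrow> bool" where
  "del_correcting q t C \<longleftrightarrow> C \<subseteq> S_all q \<and>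
     (\<forall>p1\<in>C. \<forall>p2\<in>C. p1 \<noteq> p2 \<longrightarrow> B_del t p1 \<inter> B_del t p2 = {})"

definition ins_correcting :: "nat \<Rightarrow> nat \<Rightarrow> nat list set \<Rightarrow> bool" where
  "ins_correcting q t C \<longleftrightarrow> C \<subseteq> S_all q \<and>
     (\<forall>p1\<in>C. \<forall>p2\<in>C. p1 \<noteq> p2 \<longrightarrow> B_ins q t p1 \<inter> B_ins q t p2 = {})"

definition DEL_cor :: "nat \<Rightarrow> nat \<Rightarrow> nat" where
  "DEL_cor q t = Max {card C | C. del_correcting q t C}"

definition INS_cor :: "nat \<Rightarrow> nat \<Rightarrow> nat" where
  "INS_cor q t = Max {card C | C. ins_correcting q t C}"

end

theory Submission
  imports Defs
begin

text \<open>If two codewords receive a common word under at most t tail insertions each, the shorter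
  one is obtained from the longer by deleting at most t leading symbols, so their deletion
  balls meet. Hence every t-tail-deletion-correcting code is t-tail-insertion-correcting,
  for all q and t.\<close>

lemma self_in_B_del: "p \<in> B_del t p"
  unfolding B_del_def tail_del_def by (auto intro!: exI[of _ 0])

lemma drop_in_B_del:
  assumes "k \<le> t" and "k < length p"
  shows "drop k p \<in> B_del t p"
  using assms unfolding B_del_def tail_del_def by (auto intro!: exI[of _ k] simp: min_def)

lemma shorter_tail_in_B_del:
  assumes "w1 @ p1 = w2 @ p2" and "length w1 \<le> t"
    and "length p1 \<le> length p2" and "p1 \<noteq> []"
  shows "p1 \<in> B_del t p2"
proof -
  define k where "k = length p2 - length p1"
  have "length w1 = length w2 + k"
    using arg_cong[OF assms(1), of length] assms(3) by (simp add: k_def)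
  then have "p1 = drop k p2"
    using arg_cong[OF assms(1), of "drop (length w1)"] by simp
  moreover have "k < length p2"
    using assms(3,4) by (cases p1) (auto simp: k_def)
  ultimately show ?thesis
    using drop_in_B_del \<open>length w1 = length w2 + k\<close> assms(2) by simp
qed

lemma B_ins_disjoint_if_B_del_disjoint:
  assumes "p1 \<in> S_all q" and "p2 \<in> S_all q"
    and "B_del t p1 \<inter> B_del t p2 = {}"
  shows "B_ins q t p1 \<inter> B_ins q t p2 = {}"
proof (rule ccontr)
  assume "B_ins q t p1 \<inter> B_ins q t p2 \<noteq> {}"
  then obtain w1 w2 where w: "w1 @ p1 = w2 @ p2" "length w1 \<le> t" "length w2 \<le> t"
    unfolding B_ins_def by auto
  have "p1 \<noteq> []" "p2 \<noteq> []"
    using assms(1,2) by (auto simp: S_all_def)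
  then have "p1 \<in> B_del t p2 \<or> p2 \<in> B_del t p1"
    using shorter_tail_in_B_del[OF w(1,2)] shorter_tail_in_B_del[OF w(1)[symmetric] w(3)]
    by (cases "length p1 \<le> length p2") auto
  then show False
    using assms(3) self_in_B_del by blast
qed

lemma del_correcting_imp_ins_correcting:
  "del_correcting q t C \<Longrightarrow> ins_correcting q t C"
  unfolding del_correcting_def ins_correcting_def
  using B_ins_disjoint_if_B_del_disjoint by blast

lemma finite_S_all: "finite (S_all q)"
proof -
  have "S_all q \<subseteq> {xs. set xs \<subseteq> {..<q} \<and> length xs \<le> q}"
    by (auto simp: S_all_def)
  then show ?thesis
    using finite_lists_length_le finite_subset by blast
qed

theorem mainTheorem5:
  fixes q t :: nat
  assumes "q \<ge> 1" and "t \<ge> 1"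
  shows "DEL_cor q t \<le> INS_cor q t"
proof -
  have sub: "{card C | C. del_correcting q t C} \<subseteq> {card C | C. ins_correcting q t C}"
    using del_correcting_imp_ins_correcting by blast
  have nonempty: "{card C | C. del_correcting q t C} \<noteq> {}"
    by (auto simp: del_correcting_def intro!: exI[of _ "{}"])
  have "{card C | C. ins_correcting q t C} \<subseteq> card ` Pow (S_all q)"
    by (auto simp: ins_correcting_def)
  then have fin: "finite {card C | C. ins_correcting q t C}"
    using finite_S_all finite_subset by blast
  show ?thesis
    unfolding DEL_cor_def INS_cor_def using Max_mono[OF sub nonempty fin] .
qed

end
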